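(* There is a constant $0<c<1$ such that $$\frac{\|F_{1,t}(z,w)\|}{\|(z,w)\|^4}\ge c|t|^2$$ for all $t\in\mathbb{C}$ with $|t|<1/16$ and all $(z,w)\ne(0,0)$. Consequently, for any marked point with associated maps $F_n$ and degree $d$ as in the context, for all $n\ge1$, $i\ge0$ and all $t$ with $|t|<1/16$, $$\frac{1}{\deg F_{n+i}}\log\|F_{n+i}(1,t)\|-\frac{1}{\deg F_n}\log\|F_n(1,t)\|\ge\frac{\log c}{4^{n-1}d}.$$
   Context: $F_{t_1,t_2}(z,w)=\big((t_1w^2-t_2z^2)^2,\;4t_2zw(w-z)(t_1w-t_2z)\big)$, so $F_{1,t}(z,w)=\big((w^2-tz^2)^2,\;4tzw(w-z)(w-tz)\big)$. $\|(z,w)\|=\max\{|z|,|w|\}$. For $c\in\mathbb{C}(t)\setminus\{0,1,t\}$ with homogeneous lift $C$ (coprime homogeneous polynomials $(c_1,c_2)$ of equal degree with $c(t)=c_1(t,1)/c_2(t,1)$): $F_1=F_{t_1,t_2}(C)/\gcd(F_{t_1,t_2}(C))$, $d=\deg F_1$, $F_{n+1}=F_{t_1,t_2}(F_n)/t_2^2$, $\deg F_n=4^{n-1}d$; in particular $F_{n+1}(1,t)=F_{1,t}(F_n(1,t))/t^2$. *)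

theory Defs
  imports "HOL-Analysis.Analysis"
begin

definition maxnorm :: "complex \<times> complex \<Rightarrow> real" where
  "maxnorm p = max (norm (fst p)) (norm (snd p))"

definition Fmap :: "complex \<Rightarrow> complex \<Rightarrow> complex \<times> complex \<Rightarrow> complex \<times> complex" where
  "Fmap t1 t2 p = (let z = fst p; w = snd p in
     ((t1 * w^2 - t2 * z^2)^2, 4 * t2 * z * w * (w - z) * (t1 * w - t2 * z)))"

definition hev :: "nat \<Rightarrow> (nat \<Rightarrow> complex) \<Rightarrow> complex \<Rightarrow> complex \<Rightarrow> complex" where
  "hev D a t1 t2 = (\<Sum>k\<le>D. a k * t1 ^ k * t2 ^ (D - k))"

definition is_hom :: "nat \<Rightarrow> (complex \<Rightarrow> complex \<Rightarrow> complex) \<Rightarrow> bool" where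
  "is_hom D f \<longleftrightarrow> (\<exists>a. \<forall>t1 t2. f t1 t2 = hev D a t1 t2)"

definition is_hpoly :: "(complex \<Rightarrow> complex \<Rightarrow> complex) \<Rightarrow> bool" where
  "is_hpoly f \<longleftrightarrow> (\<exists>D. is_hom D f)"

definition hdvd :: "(complex \<Rightarrow> complex \<Rightarrow> complex) \<Rightarrow> (complex \<Rightarrow> complex \<Rightarrow> complex) \<Rightarrow> bool" where
  "hdvd g f \<longleftrightarrow> (\<exists>h. is_hpoly h \<and> (\<forall>t1 t2. f t1 t2 = g t1 t2 * h t1 t2))"

definition hcoprime :: "(complex \<Rightarrow> complex \<Rightarrow> complex) \<Rightarrow> (complex \<Rightarrow> complex \<Rightarrow> complex) \<Rightarrow> bool" where
  "hcoprime f1 f2 \<longleftrightarrow>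
     \<not> (\<exists>g E. E \<ge> 1 \<and> is_hom E g \<and> g \<noteq> (\<lambda>_ _. 0) \<and> hdvd g f1 \<and> hdvd g f2)"

text \<open>Data of a marked point c = c1(t,1)/c2(t,1) in C(t) minus {0,1,t}, with homogeneous
  lift C = (c1,c2) of degree m, and the associated sequence F_n (n \<ge> 1) of degree 4^(n-1) d:
  F_1 = F_{t1,t2}(C)/gcd(F_{t1,t2}(C)) and F_{n+1} = F_{t1,t2}(F_n)/t2^2.\<close>
definition marked_seq ::
  "(complex \<Rightarrow> complex \<Rightarrow> complex) \<Rightarrow> (complex \<Rightarrow> complex \<Rightarrow> complex) \<Rightarrow> nat \<Rightarrow>
   (nat \<Rightarrow> complex \<Rightarrow> complex \<Rightarrow> complex \<times> complex) \<Rightarrow> nat \<Rightarrow> bool" where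
  "marked_seq c1 c2 m Fs d \<longleftrightarrow>
     \<comment> \<open>homogeneous lift, coprime, equal degree\<close>
     is_hom m c1 \<and> is_hom m c2 \<and> c1 \<noteq> (\<lambda>_ _. 0) \<and> c2 \<noteq> (\<lambda>_ _. 0) \<and> hcoprime c1 c2 \<and>
     \<comment> \<open>c \<notin> {0, 1, t} as elements of C(t), where c(t) = c1(t,1)/c2(t,1)\<close>
     (\<lambda>x. c1 x 1) \<noteq> (\<lambda>x. 0) \<and>
     (\<lambda>x. c1 x 1) \<noteq> (\<lambda>x. c2 x 1) \<and>
     (\<lambda>x. c1 x 1) \<noteq> (\<lambda>x. x * c2 x 1) \<and>
     \<comment> \<open>F_1 = F(C)/gcd(F(C)), homogeneous of degree d\<close>
     is_hom d (\<lambda>t1 t2. fst (Fs 1 t1 t2)) \<and> is_hom d (\<lambda>t1 t2. snd (Fs 1 t1 t2)) \<and>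
     hcoprime (\<lambda>t1 t2. fst (Fs 1 t1 t2)) (\<lambda>t1 t2. snd (Fs 1 t1 t2)) \<and>
     (\<exists>G. is_hpoly G \<and> G \<noteq> (\<lambda>_ _. 0) \<and>
        (\<forall>t1 t2. Fmap t1 t2 (c1 t1 t2, c2 t1 t2) =
                   (G t1 t2 * fst (Fs 1 t1 t2), G t1 t2 * snd (Fs 1 t1 t2)))) \<and>
     \<comment> \<open>F_n homogeneous of degree 4^(n-1) d and F_{n+1} = F(F_n)/t2^2\<close>
     (\<forall>n\<ge>1. is_hom (4 ^ (n - 1) * d) (\<lambda>t1 t2. fst (Fs n t1 t2)) \<and>
             is_hom (4 ^ (n - 1) * d) (\<lambda>t1 t2. snd (Fs n t1 t2)) \<and>
             (\<forall>t1 t2. Fmap t1 t2 (Fs n t1 t2) =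
                 (t2^2 * fst (Fs (n + 1) t1 t2), t2^2 * snd (Fs (n + 1) t1 t2))))"

end

theory Submission imports Defs begin

text \<open>If \<open>|w\<^sup>2 - t z\<^sup>2| \<ge> |t| \<parallel>(z,w)\<parallel>\<^sup>2/2\<close>, the first coordinate of \<open>F\<^sub>1\<^sub>,\<^sub>t(z,w)\<close> is already
  large. Otherwise \<open>|w| < |z|/2\<close> and \<open>|w|\<^sup>2 > |t| |z|\<^sup>2/2\<close>, so in the second coordinate
  \<open>4tzw(w - z)(w - tz)\<close> the last two factors are at least \<open>|z|/2\<close> and \<open>|w|/2\<close>, giving
  \<open>c = 1/4\<close>. As \<open>F\<^sub>1\<^sub>,\<^sub>t(F\<^sub>n(1,t)) = t\<^sup>2 F\<^sub>n\<^sub>+\<^sub>1(1,t)\<close>, the factor \<open>|t|\<^sup>2\<close> cancels and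
  \<open>\<parallel>F\<^sub>n\<^sub>+\<^sub>1(1,t)\<parallel> \<ge> \<parallel>F\<^sub>n(1,t)\<parallel>\<^sup>4/4\<close>; taking logarithms and dividing by \<open>4\<^sup>n\<^sup>-\<^sup>1 d\<close>,
  the losses form a geometric series. Zero norms (where \<open>ln 0 = 0\<close>) propagate for
  \<open>t \<noteq> 0\<close> and cannot occur at \<open>t = 0\<close>, since \<open>F\<^sub>1\<close> is coprime to \<open>t\<^sub>2\<close>.\<close>

lemma maxnorm_nonneg: "0 \<le> maxnorm p"
  by (simp add: maxnorm_def le_max_iff_disj)

lemma maxnorm_eq_0_iff: "maxnorm p = 0 \<longleftrightarrow> p = (0, 0)"
  by (cases p) (auto simp: maxnorm_def max_def)

lemma maxnorm_scale: "maxnorm (a * fst p, a * snd p) = norm a * maxnorm p"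
  by (simp add: maxnorm_def norm_mult max_mult_distrib_left)

lemma Fmap_fst_small_shape:
  fixes t z w :: complex
  assumes t: "norm t < 1/16"
    and small: "norm (w^2 - t * z^2) < norm t * maxnorm (z, w) ^ 2 / 2"
  shows "norm w < norm z / 2" and "norm t * norm z ^ 2 / 2 < norm w ^ 2"
proof -
  define M where "M = maxnorm (z, w)"
  have zM: "norm z \<le> M" and wM: "norm w \<le> M" by (auto simp: M_def maxnorm_def)
  have tz: "norm (t * z^2) = norm t * norm z ^ 2" by (simp add: norm_mult norm_power)
  have "norm (w^2) \<le> norm (t * z^2) + norm (w^2 - t * z^2)" by (rule norm_triangle_sub)
  moreover have "norm t * norm z ^ 2 \<le> norm t * M^2"
    using zM by (intro mult_left_mono power_mono) auto
  ultimately have "norm w ^ 2 < 3/2 * norm t * M^2"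
    using small by (simp add: tz M_def norm_power)
  also have "\<dots> \<le> (M/2)^2"
    using mult_right_mono[of "6 * norm t" 1 "M^2"] t by (simp add: power_divide)
  finally have wM2: "norm w < M/2"
    using power_less_imp_less_base by (metis zero_le_divide_iff zM norm_ge_zero order_trans zero_le_numeral)
  then have Mz: "M = norm z" using wM by (auto simp: M_def maxnorm_def max_def)
  with wM2 show "norm w < norm z / 2" by simp
  have "norm (t * z^2) \<le> norm (w^2) + norm (t * z^2 - w^2)" by (rule norm_triangle_sub)
  moreover have "norm (w^2 - t * z^2) < norm t * norm z ^ 2 / 2"
    using small by (simp add: Mz flip: M_def)
  ultimately show "norm t * norm z ^ 2 / 2 < norm w ^ 2"
    by (simp add: tz norm_power norm_minus_commute)
qed

lemma Fmap_snd_lower_bound: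
  fixes t z w :: complex
  assumes t: "norm t < 1/16" and w: "norm w < norm z / 2"
    and tw: "norm t * norm z ^ 2 / 2 < norm w ^ 2"
  shows "norm t ^ 2 * norm z ^ 4 / 2 \<le> norm (4 * t * z * w * (w - z) * (w - t * z))"
proof -
  have wz: "norm z / 2 \<le> norm (w - z)"
    using norm_triangle_ineq2[of z w] w by (simp add: norm_minus_commute)
  have "(2 * norm t * norm z)^2 \<le> norm t * norm z ^ 2 / 2"
    using mult_right_mono[of "8 * norm t" 1 "norm t * norm z ^ 2"] t
    by (simp add: power2_eq_square algebra_simps)
  with tw have "(2 * norm t * norm z)^2 < norm w ^ 2" by linarith
  then have "2 * norm t * norm z < norm w"
    by (rule power_less_imp_less_base) simp
  moreover have "norm w - norm t * norm z \<le> norm (w - t * z)"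
    using norm_triangle_ineq2[of w "t * z"] by (simp add: norm_mult)
  ultimately have wtz: "norm w / 2 \<le> norm (w - t * z)" by simp
  have "norm t * norm z ^ 2 * norm w ^ 2
        = 4 * norm t * norm z * norm w * (norm z / 2) * (norm w / 2)"
    by (simp add: power2_eq_square)
  also have "\<dots> \<le> 4 * norm t * norm z * norm w * norm (w - z) * norm (w - t * z)"
    by (intro mult_mono wz wtz mult_nonneg_nonneg) auto
  also have "\<dots> = norm (4 * t * z * w * (w - z) * (w - t * z))"
    by (simp add: norm_mult)
  finally have B: "norm t * norm z ^ 2 * norm w ^ 2 \<le> norm (4 * t * z * w * (w - z) * (w - t * z))" .
  have "norm t ^ 2 * norm z ^ 4 / 2 = norm t * norm z ^ 2 * (norm t * norm z ^ 2 / 2)"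
    by (simp add: power2_eq_square power4_eq_xxxx)
  also have "\<dots> \<le> norm t * norm z ^ 2 * norm w ^ 2"
    using tw by (intro mult_left_mono) auto
  finally show ?thesis using B by linarith
qed

lemma maxnorm_Fmap_lower_bound:
  fixes t z w :: complex
  assumes t: "norm t < 1/16"
  shows "norm t ^ 2 * maxnorm (z, w) ^ 4 / 4 \<le> maxnorm (Fmap 1 t (z, w))"
proof -
  define A where "A = norm (w^2 - t * z^2)"
  define B where "B = norm (4 * t * z * w * (w - z) * (w - t * z))"
  have Fmap: "maxnorm (Fmap 1 t (z, w)) = max (A^2) B"
    by (simp add: maxnorm_def Fmap_def A_def B_def norm_power)
  show ?thesis
  proof (cases "norm t * maxnorm (z, w) ^ 2 / 2 \<le> A")
    case True
    then have "(norm t * maxnorm (z, w) ^ 2 / 2)^2 \<le> A^2"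
      by (intro power_mono) auto
    then show ?thesis
      by (simp add: Fmap power_mult_distrib power_divide flip: power_mult)
  next
    case False
    then have small: "norm (w^2 - t * z^2) < norm t * maxnorm (z, w) ^ 2 / 2"
      by (simp add: A_def)
    have "norm w \<le> norm z"
      using Fmap_fst_small_shape(1)[OF t small] norm_ge_zero[of w] by linarith
    then have Mz: "maxnorm (z, w) = norm z" by (simp add: maxnorm_def max_absorb1)
    have "norm t ^ 2 * norm z ^ 4 / 2 \<le> B"
      unfolding B_def using t Fmap_fst_small_shape[OF t small] by (rule Fmap_snd_lower_bound)
    moreover have "0 \<le> norm t ^ 2 * norm z ^ 4" by simp
    ultimately have "norm t ^ 2 * norm z ^ 4 / 4 \<le> B" by linarith
    then show ?thesis unfolding Fmap Mz by (simp add: le_max_iff_disj)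
  qed
qed

lemma is_hom_isCont: "is_hom D f \<Longrightarrow> isCont (\<lambda>t. f 1 t) t0"
  unfolding is_hom_def hev_def by (auto intro!: continuous_intros)

lemma is_hom_hdvd_second_var:
  assumes hom: "is_hom D f" and root: "f 1 0 = 0"
  shows "hdvd (\<lambda>t1 t2. t2) f"
proof -
  obtain a where a: "\<And>t1 t2. f t1 t2 = hev D a t1 t2" using hom unfolding is_hom_def by blast
  show ?thesis
  proof (cases D)
    case 0
    then have "\<forall>t1 t2. f t1 t2 = t2 * hev 0 (\<lambda>_. 0) t1 t2" using root a by (simp add: hev_def)
    then show ?thesis unfolding hdvd_def is_hpoly_def is_hom_def by blast
  next
    case (Suc k)
    have split: "hev D a t1 t2 = t2 * hev k a t1 t2 + a D * t1 ^ D" for t1 t2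
      unfolding hev_def Suc sum.atMost_Suc sum_distrib_left
      by (simp add: Suc_diff_le mult.left_commute)
    have "a D = 0" using root a[of 1 0] split[of 1 0] by simp
    then have "\<forall>t1 t2. f t1 t2 = t2 * hev k a t1 t2" using a split by simp
    then show ?thesis unfolding hdvd_def is_hpoly_def is_hom_def by blast
  qed
qed

lemma marked_seq_Fmap_eq:
  assumes "marked_seq c1 c2 m Fs d" and "1 \<le> n"
  shows "Fmap t1 t2 (Fs n t1 t2) = (t2^2 * fst (Fs (Suc n) t1 t2), t2^2 * snd (Fs (Suc n) t1 t2))"
  using assms unfolding marked_seq_def by simp

lemma marked_seq_is_hom:
  assumes "marked_seq c1 c2 m Fs d" and "1 \<le> n"
  shows "is_hom (4 ^ (n - 1) * d) (\<lambda>t1 t2. fst (Fs n t1 t2))"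
    and "is_hom (4 ^ (n - 1) * d) (\<lambda>t1 t2. snd (Fs n t1 t2))"
  using assms unfolding marked_seq_def by blast+

lemma marked_seq_hcoprime:
  "marked_seq c1 c2 m Fs d \<Longrightarrow> hcoprime (\<lambda>t1 t2. fst (Fs 1 t1 t2)) (\<lambda>t1 t2. snd (Fs 1 t1 t2))"
  unfolding marked_seq_def by blast

lemma marked_seq_maxnorm_Fmap:
  assumes "marked_seq c1 c2 m Fs d" and "1 \<le> n"
  shows "maxnorm (Fmap 1 t (Fs n 1 t)) = norm t ^ 2 * maxnorm (Fs (Suc n) 1 t)"
  using maxnorm_scale[of "t^2" "Fs (Suc n) 1 t"]
  by (simp add: marked_seq_Fmap_eq[OF assms] norm_power)

lemma marked_seq_isCont_maxnorm:
  assumes "marked_seq c1 c2 m Fs d" and "1 \<le> n"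
  shows "isCont (\<lambda>t. maxnorm (Fs n 1 t)) t0"
proof -
  have "isCont (\<lambda>t. fst (Fs n 1 t)) t0" "isCont (\<lambda>t. snd (Fs n 1 t)) t0"
    using marked_seq_is_hom[OF assms] by (auto intro: is_hom_isCont)
  then show ?thesis unfolding maxnorm_def by (intro continuous_max isCont_norm)
qed

lemma marked_seq_maxnorm_step:
  assumes ms: "marked_seq c1 c2 m Fs d" and n: "1 \<le> n" and t: "norm t < 1/16"
  shows "maxnorm (Fs n 1 t) ^ 4 / 4 \<le> maxnorm (Fs (Suc n) 1 t)"
proof -
  have nonzero: "maxnorm (Fs n 1 s) ^ 4 / 4 \<le> maxnorm (Fs (Suc n) 1 s)"
    if s: "norm s < 1/16" "s \<noteq> 0" for s
  proof -
    have "norm s ^ 2 * (maxnorm (Fs n 1 s) ^ 4 / 4) \<le> norm s ^ 2 * maxnorm (Fs (Suc n) 1 s)"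
      using maxnorm_Fmap_lower_bound[OF s(1), of "fst (Fs n 1 s)" "snd (Fs n 1 s)"]
      by (simp add: marked_seq_maxnorm_Fmap[OF ms n])
    then show ?thesis using s(2) by simp
  qed
  show ?thesis
  proof (cases "t = 0")
    case False
    with nonzero t show ?thesis .
  next
    case True
    \<comment> \<open>At \<open>t = 0\<close> the recursion \<open>F(F\<^sub>n) = t\<^sup>2 F\<^sub>n\<^sub>+\<^sub>1\<close> carries no information; pass to the limit.\<close>
    have lhs: "((\<lambda>s. maxnorm (Fs n 1 s) ^ 4 / 4) \<longlongrightarrow> maxnorm (Fs n 1 0) ^ 4 / 4) (at 0)"
      using marked_seq_isCont_maxnorm[OF ms n, of 0] by (intro tendsto_intros) (auto simp: isCont_def)
    have rhs: "((\<lambda>s. maxnorm (Fs (Suc n) 1 s)) \<longlongrightarrow> maxnorm (Fs (Suc n) 1 0)) (at 0)"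
      using marked_seq_isCont_maxnorm[OF ms, of "Suc n" 0] by (simp add: isCont_def)
    have "\<forall>\<^sub>F s in at 0. maxnorm (Fs n 1 s) ^ 4 / 4 \<le> maxnorm (Fs (Suc n) 1 s)"
      unfolding eventually_at using nonzero by (auto simp: dist_norm intro!: exI[of _ "1/16"])
    from tendsto_le[OF trivial_limit_at rhs lhs this] show ?thesis using True by simp
  qed
qed

lemma marked_seq_maxnorm_vanishing_step:
  assumes ms: "marked_seq c1 c2 m Fs d" and n: "1 \<le> n" and t: "t \<noteq> 0"
    and vanish: "maxnorm (Fs n 1 t) = 0"
  shows "maxnorm (Fs (Suc n) 1 t) = 0"
proof -
  have "Fs n 1 t = (0, 0)" using vanish by (simp add: maxnorm_eq_0_iff)
  then have "maxnorm (Fmap 1 t (Fs n 1 t)) = 0" by (simp add: Fmap_def maxnorm_def)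
  then show ?thesis using t by (simp add: marked_seq_maxnorm_Fmap[OF ms n])
qed

lemma marked_seq_maxnorm_at_0_pos:
  assumes ms: "marked_seq c1 c2 m Fs d" and n: "1 \<le> n"
  shows "0 < maxnorm (Fs n 1 0)"
  using n
proof (induction n rule: dec_induct)
  case base
  have "is_hom 1 (\<lambda>t1 t2::complex. t2)"
    unfolding is_hom_def hev_def by (rule exI[of _ "\<lambda>k. if k = 0 then 1 else 0"]) simp
  moreover have "(\<lambda>t1 t2::complex. t2) \<noteq> (\<lambda>_ _. 0)" by (metis one_neq_zero)
  ultimately have "\<not> (hdvd (\<lambda>t1 t2. t2) (\<lambda>t1 t2. fst (Fs 1 t1 t2)) \<and>
                     hdvd (\<lambda>t1 t2. t2) (\<lambda>t1 t2. snd (Fs 1 t1 t2)))"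
    using marked_seq_hcoprime[OF ms] unfolding hcoprime_def by blast
  then have "Fs 1 1 0 \<noteq> (0, 0)"
    using marked_seq_is_hom[OF ms order_refl] by (auto intro: is_hom_hdvd_second_var)
  then show ?case using maxnorm_nonneg maxnorm_eq_0_iff by (metis order_neq_le_trans)
next
  case (step k)
  then have "0 < maxnorm (Fs k 1 0) ^ 4 / 4" by simp
  also have "\<dots> \<le> maxnorm (Fs (Suc k) 1 0)"
    using step.hyps by (intro marked_seq_maxnorm_step[OF ms]) auto
  finally show ?case .
qed

lemma ln_growth_normalized_lower_bound:
  fixes L :: "nat \<Rightarrow> real" and c :: real
  assumes c: "0 < c" "c \<le> 1" and n: "1 \<le> n"
    and nonneg: "\<And>k. 0 \<le> L k"
    and step: "\<And>k. n \<le> k \<Longrightarrow> c * L k ^ 4 \<le> L (Suc k)"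
    and vanish: "\<And>k. n \<le> k \<Longrightarrow> L k = 0 \<Longrightarrow> L (Suc k) = 0"
  shows "ln c / 4 ^ (n - 1) \<le> ln (L (n + i)) / 4 ^ (n + i - 1) - ln (L n) / 4 ^ (n - 1)"
proof -
  have lnc: "ln c \<le> 0" using c by simp
  consider "L n = 0" | "0 < L n" using nonneg[of n] by linarith
  then show ?thesis
  proof cases
    case 1
    have "L (n + j) = 0" for j
      by (induction j) (use 1 vanish in auto)
    with 1 show ?thesis using lnc by (simp add: divide_nonpos_pos)
  next
    case 2
    have pos: "0 < L (n + j)" for j
    proof (induction j)
      case (Suc j)
      have "0 < c * L (n + j) ^ 4" using Suc c by simp
      also have "\<dots> \<le> L (n + Suc j)" using step[of "n + j"] by simp
      finally show ?case .
    qed (use 2 in simp)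
    define q :: "nat \<Rightarrow> real" where "q j = 4 ^ (n + j - 1)" for j
    have q_Suc: "q (Suc j) = 4 * q j" for j
      using n by (simp add: q_def flip: power_Suc)
    have q_pos: "0 < q j" for j by (simp add: q_def)
    \<comment> \<open>The step bound makes \<open>ln L\<^sub>k + (ln c)/3\<close> grow at least by the factor 4.\<close>
    define p where "p j = (ln (L (n + j)) + ln c / 3) / q j" for j
    have "p j \<le> p (Suc j)" for j
    proof -
      have "ln (c * L (n + j) ^ 4) \<le> ln (L (n + Suc j))"
        using step[of "n + j"] pos[of j] c by (intro ln_mono) simp_all
      then have "ln c + 4 * ln (L (n + j)) \<le> ln (L (n + Suc j))"
        using pos[of j] c by (simp add: ln_mult ln_realpow)
      then have "4 * (ln (L (n + j)) + ln c / 3) \<le> ln (L (n + Suc j)) + ln c / 3"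
        by (simp add: algebra_simps)
      then have "4 * (ln (L (n + j)) + ln c / 3) / (4 * q j)
                 \<le> (ln (L (n + Suc j)) + ln c / 3) / (4 * q j)"
        using q_pos[of j] by (intro divide_right_mono) simp_all
      moreover have "p j = 4 * (ln (L (n + j)) + ln c / 3) / (4 * q j)"
        unfolding p_def by (rule mult_divide_mult_cancel_left[symmetric]) simp
      ultimately show ?thesis unfolding p_def q_Suc by simp
    qed
    then have "p 0 \<le> p i" by (rule lift_Suc_mono_le) simp
    moreover have "ln c / (3 * q i) \<le> 0"
      using q_pos[of i] lnc by (simp add: divide_nonpos_pos)
    ultimately have "ln c / (3 * q 0) \<le> ln (L (n + i)) / q i - ln (L n) / q 0"
      by (simp add: p_def add_divide_distrib)
    moreover have "ln c / q 0 \<le> ln c / (3 * q 0)"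
      using q_pos[of 0] lnc by (simp add: field_simps)
    ultimately show ?thesis by (simp add: q_def)
  qed
qed

theorem lemma4p4:
  shows "\<exists>c::real. 0 < c \<and> c < 1 \<and>
    (\<forall>t z w. norm t < 1/16 \<longrightarrow> (z, w) \<noteq> (0, 0) \<longrightarrow>
        maxnorm (Fmap 1 t (z, w)) / maxnorm (z, w) ^ 4 \<ge> c * norm t ^ 2) \<and>
    (\<forall>c1 c2 m Fs d. marked_seq c1 c2 m Fs d \<longrightarrow>
       (\<forall>n i t. n \<ge> 1 \<longrightarrow> norm t < 1/16 \<longrightarrow>
          ln (maxnorm (Fs (n + i) 1 t)) / real (4 ^ (n + i - 1) * d)
            - ln (maxnorm (Fs n 1 t)) / real (4 ^ (n - 1) * d)
          \<ge> ln c / real (4 ^ (n - 1) * d)))"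
proof (intro exI[of _ "1/4"] conjI allI impI)
  fix t z w :: complex
  assume t: "norm t < 1/16" and zw: "(z, w) \<noteq> (0, 0)"
  then have "0 < maxnorm (z, w)" using maxnorm_nonneg maxnorm_eq_0_iff by (metis order_neq_le_trans)
  then show "1/4 * norm t ^ 2 \<le> maxnorm (Fmap 1 t (z, w)) / maxnorm (z, w) ^ 4"
    using maxnorm_Fmap_lower_bound[OF t, of z w] by (simp add: pos_le_divide_eq)
next
  fix c1 c2 m Fs d and n i :: nat and t :: complex
  assume ms: "marked_seq c1 c2 m Fs d" and n: "1 \<le> n" and t: "norm t < 1/16"
  have "ln (1/4) / 4 ^ (n - 1) \<le>
        ln (maxnorm (Fs (n + i) 1 t)) / 4 ^ (n + i - 1) - ln (maxnorm (Fs n 1 t)) / 4 ^ (n - 1)"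
  proof (rule ln_growth_normalized_lower_bound)
    fix k assume "n \<le> k"
    with n show "1/4 * maxnorm (Fs k 1 t) ^ 4 \<le> maxnorm (Fs (Suc k) 1 t)"
      using marked_seq_maxnorm_step[OF ms _ t, of k] by simp
    assume "maxnorm (Fs k 1 t) = 0"
    with \<open>n \<le> k\<close> n show "maxnorm (Fs (Suc k) 1 t) = 0"
      using marked_seq_maxnorm_at_0_pos[OF ms] marked_seq_maxnorm_vanishing_step[OF ms]
      by (metis less_irrefl order_trans)
  qed (use n maxnorm_nonneg in auto)
  then show "ln (1/4) / real (4 ^ (n - 1) * d) \<le>
        ln (maxnorm (Fs (n + i) 1 t)) / real (4 ^ (n + i - 1) * d)
          - ln (maxnorm (Fs n 1 t)) / real (4 ^ (n - 1) * d)"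
    by (drule_tac c = "real d" in divide_right_mono)
       (simp_all add: diff_divide_distrib divide_divide_eq_left)
qed simp_all

end
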